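(* Let $\bm{X}\in\mathbb{R}^{n_1\times r}$, $\bm{Y}\in\mathbb{R}^{n_2\times r}$, and let $\bm{X}_\star,\bm{Y}_\star$, $\bm{M}_\star=\bm{X}_\star\bm{Y}_\star^\top$ be as in the context. If $\|\bm{Y}-\bm{Y}_\star\|\le\sigma_1(\bm{Y}_\star)/4$, then \[ \|(\bm{X}\bm{Y}^\top-\bm{M}_\star)\bm{Y}\|_{\mathrm{F}}\le\frac32\sigma_1(\bm{Y}_\star)\Big(\|(\bm{X}-\bm{X}_\star)\bm{Y}^\top\|_{\mathrm{F}}+\|\bm{X}(\bm{Y}-\bm{Y}_\star)^\top\|_{\mathrm{F}}+\|\bm{X}-\bm{X}_\star\|_{\mathrm{F}}\|\bm{Y}-\bm{Y}_\star\|_{\mathrm{F}}\Big). \] Similarly, if $\|\bm{X}-\bm{X}_\star\|\le\sigma_1(\bm{X}_\star)/4$, then \[ \|(\bm{X}\bm{Y}^\top-\bm{M}_\star)^\top\bm{X}\|_{\mathrm{F}}\le\frac32\sigma_1(\bm{X}_\star)\Big(\|(\bm{X}-\bm{X}_\star)\bm{Y}^\top\|_{\mathrm{F}}+\|\bm{X}(\bm{Y}-\bm{Y}_\star)^\top\|_{\mathrm{F}}+\|\bm{X}-\bm{X}_\star\|_{\mathrm{F}}\|\bm{Y}-\bm{Y}_\star\|_{\mathrm{F}}\Big). \]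
   Context: $\bm{M}_\star\in\mathbb{R}^{n_1\times n_2}$ has rank $r$ and compact SVD $\bm{M}_\star=\bm{U}_\star\bm{\Sigma}_\star\bm{V}_\star^\top$; $\bm{X}_\star=\bm{U}_\star\bm{\Sigma}_\star^{1/2}$, $\bm{Y}_\star=\bm{V}_\star\bm{\Sigma}_\star^{1/2}$, so $\bm{M}_\star=\bm{X}_\star\bm{Y}_\star^\top$. $\sigma_1(\cdot)$ is the largest singular value and $\|\cdot\|$ the spectral norm. *)

theory Defs
  imports "HOL-Analysis.Analysis"
begin

text \<open>Spectral norm (largest singular value) of a real matrix: operator norm w.r.t. Euclidean norms.\<close>
definition spec_norm :: "real^'n^'m \<Rightarrow> real" where
  "spec_norm A = onorm (\<lambda>x. A *v x)"

definition frob_norm :: "real^'n^'m \<Rightarrow> real" where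
  "frob_norm A = sqrt (\<Sum>i\<in>UNIV. \<Sum>j\<in>UNIV. (A $ i $ j)^2)"

definition diag_mat :: "real^'r \<Rightarrow> real^'r^'r" where
  "diag_mat s = (\<chi> i j. if i = j then s $ i else 0)"

end

theory Submission
  imports Defs
begin

text \<open>The square roots of the singular values balance the factorisation, so
  \<open>M\<^sub>\<star> = X\<^sub>\<star> Y\<^sub>\<star>\<^sup>T\<close>, and then
  \<open>XY\<^sup>T - M\<^sub>\<star> = (X - X\<^sub>\<star>)Y\<^sup>T + X(Y - Y\<^sub>\<star>)\<^sup>T - (X - X\<^sub>\<star>)(Y - Y\<^sub>\<star>)\<^sup>T\<close>.
  The triangle inequality and \<open>\<parallel>AB\<parallel>\<^sub>F \<le> \<parallel>A\<parallel>\<^sub>F \<parallel>B\<parallel> \<le> \<parallel>A\<parallel>\<^sub>F \<parallel>B\<parallel>\<^sub>F\<close> bound the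
  Frobenius norm of the residual by the bracket on the right-hand side. Multiplying
  by \<open>Y\<close> costs at most a factor \<open>\<parallel>Y\<parallel> \<le> \<parallel>Y\<^sub>\<star>\<parallel> + \<parallel>Y - Y\<^sub>\<star>\<parallel> \<le> 5/4 \<sigma>\<^sub>1(Y\<^sub>\<star>)\<close>;
  the second claim is the first one for the transposed residual.\<close>

lemma frob_norm_eq_norm: "frob_norm (A::real^'n^'m) = norm A"
  unfolding frob_norm_def norm_vec_def L2_set_def
  by (simp add: sum_nonneg)

lemma frob_norm_transpose: "frob_norm (transpose (A::real^'n^'m)) = frob_norm A"
proof -
  have "frob_norm (transpose A) = sqrt (\<Sum>i\<in>UNIV. \<Sum>j\<in>UNIV. (A $ j $ i)^2)"
    by (simp add: frob_norm_def transpose_def)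
  also have "\<dots> = frob_norm A"
    unfolding frob_norm_def by (subst sum.swap) (rule refl)
  finally show ?thesis .
qed

lemma spec_norm_nonneg: "0 \<le> spec_norm (A::real^'n^'m)"
  unfolding spec_norm_def by (rule onorm_pos_le) simp

lemma norm_matrix_vector_mult_le: "norm ((A::real^'n^'m) *v x) \<le> spec_norm A * norm x"
  unfolding spec_norm_def by (rule onorm) simp

lemma spec_norm_triangle: "spec_norm ((A::real^'n^'m) + B) \<le> spec_norm A + spec_norm B"
proof -
  have "(\<lambda>x. (A + B) *v x) = (\<lambda>x. A *v x + B *v x)"
    by (simp add: matrix_vector_mult_add_rdistrib)
  then show ?thesis
    unfolding spec_norm_def using onorm_triangle[of "\<lambda>x. A *v x" "\<lambda>x. B *v x"] by simp
qed

lemma spec_norm_transpose_le: "spec_norm (transpose (A::real^'n^'m)) \<le> spec_norm A"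
  unfolding spec_norm_def
proof (rule onorm_le)
  fix v :: "real^'m"
  define w where "w = transpose A *v v"
  have "norm w ^ 2 = inner v (A *v w)"
    by (simp add: w_def power2_norm_eq_inner dot_lmul_matrix)
  also have "\<dots> \<le> norm v * (spec_norm A * norm w)"
    using norm_cauchy_schwarz[of v "A *v w"] norm_matrix_vector_mult_le[of A w]
    by (meson mult_left_mono norm_ge_zero order_trans)
  finally have "norm w * norm w \<le> (spec_norm A * norm v) * norm w"
    by (simp add: power2_eq_square algebra_simps)
  then have "norm w \<le> spec_norm A * norm v"
    using spec_norm_nonneg[of A] by (cases "norm w = 0") auto
  then show "norm (transpose A *v v) \<le> onorm ((*v) A) * norm v"
    by (simp add: w_def spec_norm_def)
qed

lemma spec_norm_transpose: "spec_norm (transpose (A::real^'n^'m)) = spec_norm A"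
  using spec_norm_transpose_le[of A] spec_norm_transpose_le[of "transpose A"]
  by simp

lemma spec_norm_le_frob_norm: "spec_norm (A::real^'n^'m) \<le> frob_norm A"
  unfolding spec_norm_def
proof (rule onorm_le)
  fix x :: "real^'n"
  have "norm (A *v x) = L2_set (\<lambda>i. norm (inner (A $ i) x)) UNIV"
    by (simp add: norm_vec_def matrix_vector_mul_component)
  also have "\<dots> \<le> L2_set (\<lambda>i. norm x * norm (A $ i)) UNIV"
    by (intro L2_set_mono) (simp_all add: Cauchy_Schwarz_ineq2 mult.commute[of "norm x"])
  also have "\<dots> = frob_norm A * norm x"
    by (simp add: norm_vec_def L2_set_right_distrib frob_norm_eq_norm mult.commute)
  finally show "norm (A *v x) \<le> frob_norm A * norm x" .
qed

lemma frob_norm_mult_le: "frob_norm ((A::real^'k^'m) ** (B::real^'n^'k)) \<le> frob_norm A * spec_norm B"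
proof -
  have row_eq: "(A ** B) $ i = transpose B *v (A $ i)" for i
    by (simp add: vec_eq_iff matrix_matrix_mult_def matrix_vector_mult_def transpose_def mult.commute)
  have "norm (A ** B) = L2_set (\<lambda>i. norm (transpose B *v (A $ i))) UNIV"
    by (simp add: norm_vec_def row_eq)
  also have "\<dots> \<le> L2_set (\<lambda>i. spec_norm B * norm (A $ i)) UNIV"
    using norm_matrix_vector_mult_le[of "transpose B"]
    by (intro L2_set_mono) (simp_all add: spec_norm_transpose)
  also have "\<dots> = frob_norm A * spec_norm B"
    by (simp add: norm_vec_def L2_set_right_distrib spec_norm_nonneg frob_norm_eq_norm mult.commute)
  finally show ?thesis by (simp add: frob_norm_eq_norm)
qed

lemma frob_norm_mult_le_frob_norm:
  "frob_norm ((A::real^'k^'m) ** (B::real^'n^'k)) \<le> frob_norm A * frob_norm B"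
  using frob_norm_mult_le[of A B] spec_norm_le_frob_norm[of B]
    mult_left_mono[of "spec_norm B" "frob_norm B" "frob_norm A"]
  by (simp add: frob_norm_eq_norm)

lemma frob_norm_mult_le_of_spec_norm_close:
  fixes A :: "real^'k^'m" and B B0 :: "real^'n^'k"
  assumes "spec_norm (B - B0) \<le> spec_norm B0 / 4" and "frob_norm A \<le> c"
  shows "frob_norm (A ** B) \<le> 3/2 * spec_norm B0 * c"
proof -
  have "spec_norm B \<le> spec_norm B0 + spec_norm (B - B0)"
    using spec_norm_triangle[of B0 "B - B0"] by simp
  also have "\<dots> \<le> 3/2 * spec_norm B0"
    using assms(1) spec_norm_nonneg[of B0] by simp
  moreover have "0 \<le> c"
    using assms(2) norm_ge_zero[of A] unfolding frob_norm_eq_norm by linarith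
  ultimately have "frob_norm A * spec_norm B \<le> c * (3/2 * spec_norm B0)"
    using assms(2) spec_norm_nonneg[of B] by (intro mult_mono) simp_all
  then show ?thesis
    using frob_norm_mult_le[of A B] by (simp add: mult_ac)
qed

lemma matrix_diff_ldistrib: "(A::real^'k^'m) ** ((B::real^'n^'k) - C) = A ** B - A ** C"
  by (simp add: vec_eq_iff matrix_matrix_mult_def sum_subtractf right_diff_distrib)

lemma matrix_diff_rdistrib: "((A::real^'k^'m) - B) ** (C::real^'n^'k) = A ** C - B ** C"
  by (simp add: vec_eq_iff matrix_matrix_mult_def sum_subtractf left_diff_distrib)

lemma transpose_diff: "transpose ((A::real^'k^'m) - B) = transpose A - transpose B"
  by (simp add: vec_eq_iff transpose_def)

lemma mult_transpose_diff_expand: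
  fixes X X0 :: "real^'r^'m" and Y Y0 :: "real^'r^'n"
  shows "X ** transpose Y - X0 ** transpose Y0 =
    (X - X0) ** transpose Y + X ** transpose (Y - Y0) - (X - X0) ** transpose (Y - Y0)"
  unfolding matrix_diff_ldistrib matrix_diff_rdistrib transpose_diff by (simp add: algebra_simps)

lemma frob_norm_mult_transpose_diff_le:
  fixes X X0 :: "real^'r^'m" and Y Y0 :: "real^'r^'n"
  shows "frob_norm (X ** transpose Y - X0 ** transpose Y0)
    \<le> frob_norm ((X - X0) ** transpose Y) + frob_norm (X ** transpose (Y - Y0))
      + frob_norm (X - X0) * frob_norm (Y - Y0)"
  using norm_triangle_ineq4[of "(X - X0) ** transpose Y + X ** transpose (Y - Y0)"
      "(X - X0) ** transpose (Y - Y0)"]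
    norm_triangle_ineq[of "(X - X0) ** transpose Y" "X ** transpose (Y - Y0)"]
    frob_norm_mult_le_frob_norm[of "X - X0" "transpose (Y - Y0)", unfolded frob_norm_transpose]
  unfolding mult_transpose_diff_expand[of X Y X0 Y0] frob_norm_eq_norm
  by linarith

lemma transpose_diag_mat: "transpose (diag_mat a) = diag_mat a"
  by (simp add: vec_eq_iff transpose_def diag_mat_def)

lemma diag_mat_mult: "diag_mat a ** diag_mat b = diag_mat (a * b)"
proof -
  have "(\<Sum>k\<in>UNIV. (if i = k then a $ i else 0) * (if k = j then b $ k else 0))
      = (\<Sum>k\<in>UNIV. if k = i then (if i = j then a $ i * b $ i else 0) else 0)" for i j
    by (rule sum.cong) auto
  then show ?thesis
    by (simp add: vec_eq_iff matrix_matrix_mult_def diag_mat_def)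
qed

lemma balanced_factors_mult_transpose:
  fixes U :: "real^'r^'m" and V :: "real^'r^'n" and s :: "real^'r"
  assumes "\<forall>i. 0 \<le> s $ i"
  shows "(U ** diag_mat (\<chi> i. sqrt (s $ i))) ** transpose (V ** diag_mat (\<chi> i. sqrt (s $ i)))
    = U ** diag_mat s ** transpose V"
proof -
  define D where "D = diag_mat (\<chi> i. sqrt (s $ i))"
  have "(\<chi> i. sqrt (s $ i)) * (\<chi> i. sqrt (s $ i)) = s"
    using assms by (simp add: vec_eq_iff)
  then have "D ** D = diag_mat s"
    by (simp add: D_def diag_mat_mult)
  have "(U ** D) ** transpose (V ** D) = U ** (D ** D) ** transpose V"
    by (simp add: D_def matrix_transpose_mul transpose_diag_mat matrix_mul_assoc)
  with \<open>D ** D = diag_mat s\<close> show ?thesis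
    by (simp add: D_def)
qed

theorem lemma4:
  fixes M_star :: "real^'n2^'n1"
    and U_star :: "real^'r^'n1" and V_star :: "real^'r^'n2" and s :: "real^'r"
    and X_star X :: "real^'r^'n1" and Y_star Y :: "real^'r^'n2"
  assumes rank_M: "rank M_star = CARD('r)"
    and U_orth: "transpose U_star ** U_star = mat 1"
    and V_orth: "transpose V_star ** V_star = mat 1"
    and s_pos: "\<forall>i. s $ i > 0"
    and svd: "M_star = U_star ** diag_mat s ** transpose V_star"
    and X_star_def: "X_star = U_star ** diag_mat (\<chi> i. sqrt (s $ i))"
    and Y_star_def: "Y_star = V_star ** diag_mat (\<chi> i. sqrt (s $ i))"
  shows "(spec_norm (Y - Y_star) \<le> spec_norm Y_star / 4 \<longrightarrow>
           frob_norm ((X ** transpose Y - M_star) ** Y)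
             \<le> 3/2 * spec_norm Y_star *
                (frob_norm ((X - X_star) ** transpose Y) + frob_norm (X ** transpose (Y - Y_star))
                 + frob_norm (X - X_star) * frob_norm (Y - Y_star)))
       \<and> (spec_norm (X - X_star) \<le> spec_norm X_star / 4 \<longrightarrow>
           frob_norm (transpose (X ** transpose Y - M_star) ** X)
             \<le> 3/2 * spec_norm X_star *
                (frob_norm ((X - X_star) ** transpose Y) + frob_norm (X ** transpose (Y - Y_star))
                 + frob_norm (X - X_star) * frob_norm (Y - Y_star)))"
proof -
  have "\<forall>i. 0 \<le> s $ i"
    using s_pos by (simp add: less_imp_le)
  then have "M_star = X_star ** transpose Y_star"
    unfolding svd X_star_def Y_star_def by (simp add: balanced_factors_mult_transpose)
  then have residual: "frob_norm (X ** transpose Y - M_star)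
      \<le> frob_norm ((X - X_star) ** transpose Y) + frob_norm (X ** transpose (Y - Y_star))
        + frob_norm (X - X_star) * frob_norm (Y - Y_star)"
    using frob_norm_mult_transpose_diff_le by simp
  show ?thesis
    using residual
    by (intro conjI impI frob_norm_mult_le_of_spec_norm_close) (simp_all add: frob_norm_transpose)
qed

end
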